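(* Let $R = \{(x,y,z)\in\mathbb{R}^3 : x^2+y^2-z^2\le 1,\ y^2+z^2-x^2\le 1,\ z^2+x^2-y^2\le 1\}$ be the intersection of the three solid hyperboloids. Then the volume (Lebesgue measure) of $R$ equals $8\log 2 = \log 256$, where $\log$ denotes the natural logarithm. *)

theory Defs
  imports "HOL-Analysis.Analysis"
begin

definition hyperboloid_region :: "(real \<times> real \<times> real) set" where
  "hyperboloid_region = {(x, y, z). x^2 + y^2 - z^2 \<le> 1 \<and> y^2 + z^2 - x^2 \<le> 1 \<and> z^2 + x^2 - y^2 \<le> 1}"

end

theory Submission
  imports Defs "HOL-Real_Asymp.Real_Asymp"
begin

(* For fixed x and y the section of the region in z is {z. x^2 + y^2 - 1 <= z^2 <= 1 - |x^2 - y^2|},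
   a symmetric pair of intervals of total length 2 (sqrt (1 - |x^2 - y^2|) - sqrt (max 0 (x^2 + y^2 - 1))).
   Integrating this over y with the elementary primitives of sqrt (c + y^2) and sqrt (m - y^2) gives
   the area of the cross-section at x = a, namely
     A(a) = 2 ((1 - a^2) ln ((1 + a) / (1 - a)) + (1 + a^2) (pi/2 - 2 arctan a))   for 0 < a < 1,
   and A has an explicit primitive whose values at 0 and 1 are 0 and 4 ln 2; by symmetry in x the
   volume is 8 ln 2. *)

lemma emeasure_lborel_triple_iterated:
  fixes A :: "(real \<times> real \<times> real) set"
  assumes "A \<in> sets borel"
  shows "emeasure lborel A =
    (\<integral>\<^sup>+x. (\<integral>\<^sup>+y. emeasure lborel {z. (x, y, z) \<in> A} \<partial>lborel) \<partial>lborel)"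
proof -
  have A: "A \<in> sets (lborel \<Otimes>\<^sub>M (lborel \<Otimes>\<^sub>M lborel))"
    using assms by (simp only: lborel_prod) simp
  have "emeasure lborel A = emeasure (lborel \<Otimes>\<^sub>M (lborel \<Otimes>\<^sub>M lborel)) A"
    by (simp only: lborel_prod)
  also have "\<dots> = (\<integral>\<^sup>+x. emeasure (lborel \<Otimes>\<^sub>M lborel) (Pair x -` A) \<partial>lborel)"
    using A by (intro sigma_finite_measure.emeasure_pair_measure_alt)
      (simp_all add: lborel_prod lborel.sigma_finite_measure_axioms)
  also have "\<dots> = (\<integral>\<^sup>+x. (\<integral>\<^sup>+y. emeasure lborel (Pair y -` Pair x -` A) \<partial>lborel) \<partial>lborel)"
    using sets_Pair1[OF A]
    by (intro nn_integral_cong sigma_finite_measure.emeasure_pair_measure_alt)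
      (simp_all add: lborel.sigma_finite_measure_axioms)
  finally show ?thesis
    by (simp add: vimage_def)
qed

lemma has_integral_comp_abs:
  fixes f :: "real \<Rightarrow> real"
  assumes "(f has_integral I) {0..b}" "0 \<le> b"
  shows "((\<lambda>x. f \<bar>x\<bar>) has_integral 2 * I) {-b..b}"
proof -
  have right: "((\<lambda>x. f \<bar>x\<bar>) has_integral I) {0..b}"
    using assms(1) by (rule has_integral_eq[rotated]) simp
  then have "((\<lambda>x. f \<bar>x\<bar>) has_integral I) {-b..0}"
    by (subst has_integral_reflect_real[symmetric]) simp
  from has_integral_combine[OF _ _ this right] assms(2) show ?thesis
    by simp
qed

lemma emeasure_lborel_abs_between:
  fixes p q :: real
  assumes "0 \<le> p" "p \<le> q"
  shows "emeasure lborel {z. p \<le> \<bar>z\<bar> \<and> \<bar>z\<bar> \<le> q} = ennreal (2 * (q - p))"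
proof -
  have "{z. p \<le> \<bar>z\<bar> \<and> \<bar>z\<bar> \<le> q} = {-q..-p} \<union> {p..q}"
    using assms by auto
  moreover have "emeasure lborel ({-q..-p} \<union> {p..q}) = emeasure lborel {-q..-p} + emeasure lborel {p..q}"
    if "p \<noteq> 0" using that assms by (intro plus_emeasure[symmetric]) auto
  moreover have "{-q..-p} \<union> {p..q} = {-q..q}" if "p = 0"
    using that by auto
  ultimately show ?thesis
    using assms by (cases "p = 0") (simp_all flip: ennreal_plus)
qed

lemma emeasure_lborel_square_between:
  fixes A B :: real
  shows "emeasure lborel {z. A \<le> z\<^sup>2 \<and> z\<^sup>2 \<le> B} = ennreal (2 * (sqrt B - sqrt (max 0 A)))"
proof -
  have "A \<le> z\<^sup>2 \<longleftrightarrow> sqrt (max 0 A) \<le> \<bar>z\<bar>" for z :: real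
    by (metis max.bounded_iff real_sqrt_abs real_sqrt_le_iff zero_le_power2)
  moreover have "z\<^sup>2 \<le> B \<longleftrightarrow> \<bar>z\<bar> \<le> sqrt B" for z :: real
    by (metis real_sqrt_abs real_sqrt_le_iff)
  ultimately have set: "{z. A \<le> z\<^sup>2 \<and> z\<^sup>2 \<le> B} = {z. sqrt (max 0 A) \<le> \<bar>z\<bar> \<and> \<bar>z\<bar> \<le> sqrt B}"
    by blast
  show ?thesis
  proof (cases "sqrt (max 0 A) \<le> sqrt B")
    case True
    then show ?thesis
      unfolding set by (intro emeasure_lborel_abs_between) auto
  next
    case False
    then have empty: "{z. sqrt (max 0 A) \<le> \<bar>z\<bar> \<and> \<bar>z\<bar> \<le> sqrt B} = {}"
      by (blast intro: order_trans)
    have zero: "ennreal (2 * (sqrt B - sqrt (max 0 A))) = 0"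
      using False by (intro ennreal_neg) (auto simp: max_def)
    show ?thesis
      unfolding set empty zero by simp
  qed
qed

(* For c < 0 this is the arcosh-type primitive, valid for y >= sqrt (- c). *)
definition sqrt_plus_square_primitive :: "real \<Rightarrow> real \<Rightarrow> real" where
  "sqrt_plus_square_primitive c y = (y * sqrt (c + y\<^sup>2) + c * ln (y + sqrt (c + y\<^sup>2))) / 2"

definition sqrt_minus_square_primitive :: "real \<Rightarrow> real \<Rightarrow> real" where
  "sqrt_minus_square_primitive m y = (y * sqrt (m - y\<^sup>2) + m * arctan (y / sqrt (m - y\<^sup>2))) / 2"

lemma sqrt_plus_square_primitive_deriv:
  assumes "0 < c + y\<^sup>2" "0 < y + sqrt (c + y\<^sup>2)"
  shows "(sqrt_plus_square_primitive c has_real_derivative sqrt (c + y\<^sup>2)) (at y)"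
proof -
  define s where "s = sqrt (c + y\<^sup>2)"
  have s: "0 < s" "s\<^sup>2 = c + y\<^sup>2" "0 < y + s"
    using assms by (simp_all add: s_def)
  have deriv: "(sqrt_plus_square_primitive c has_real_derivative
      (s + y * y / s + c * (1 + y / s) / (y + s)) / 2) (at y)"
    unfolding sqrt_plus_square_primitive_def s_def using assms
    by (auto intro!: derivative_eq_intros simp: inverse_eq_divide algebra_simps)
  have "c * (1 + y / s) / (y + s) = c / s"
    using s by (simp add: divide_simps)
  then have eq: "(s + y * y / s + c * (1 + y / s) / (y + s)) / 2 = s"
    using s by (simp add: divide_simps power2_eq_square) algebra
  show ?thesis
    using deriv[unfolded eq] by (simp only: s_def)
qed

lemma sqrt_minus_square_primitive_deriv:
  assumes "y\<^sup>2 < m"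
  shows "(sqrt_minus_square_primitive m has_real_derivative sqrt (m - y\<^sup>2)) (at y)"
proof -
  define s where "s = sqrt (m - y\<^sup>2)"
  have s: "0 < s" "m = s\<^sup>2 + y\<^sup>2"
    using assms by (simp_all add: s_def)
  have deriv: "(sqrt_minus_square_primitive m has_real_derivative
      (s - y * y / s + m * ((s + y * y / s) / (m - y\<^sup>2)) / (1 + (y / s)\<^sup>2)) / 2) (at y)"
    unfolding sqrt_minus_square_primitive_def s_def using assms
    by (auto intro!: derivative_eq_intros simp: field_simps)
  have eq: "(s - y * y / s + m * ((s + y * y / s) / (m - y\<^sup>2)) / (1 + (y / s)\<^sup>2)) / 2 = s"
    using s by (simp add: divide_simps power2_eq_square)
  show ?thesis
    using deriv[unfolded eq] by (simp only: s_def)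
qed

lemma has_integral_sqrt_plus_square:
  fixes a b c :: real
  assumes "0 \<le> a" "a \<le> b" "0 \<le> c + a\<^sup>2" "0 < a + sqrt (c + a\<^sup>2)"
  shows "((\<lambda>y. sqrt (c + y\<^sup>2)) has_integral
    sqrt_plus_square_primitive c b - sqrt_plus_square_primitive c a) {a..b}"
proof (rule fundamental_theorem_of_calculus_interior)
  have log_arg_pos: "0 < y + sqrt (c + y\<^sup>2)" if "a \<le> y" for y
  proof -
    have "a\<^sup>2 \<le> y\<^sup>2"
      using that assms(1) by (simp add: power_mono)
    then have "sqrt (c + a\<^sup>2) \<le> sqrt (c + y\<^sup>2)"
      by simp
    with that assms(4) show ?thesis
      by linarith
  qed
  show "continuous_on {a..b} (sqrt_plus_square_primitive c)"
    unfolding sqrt_plus_square_primitive_def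
    using log_arg_pos by (intro continuous_intros) (auto simp: less_imp_neq[symmetric])
  fix y
  assume y: "y \<in> {a<..<b}"
  then have "a\<^sup>2 < y\<^sup>2"
    using assms(1) by (simp add: power_strict_mono)
  with y assms(3) show "(sqrt_plus_square_primitive c has_vector_derivative sqrt (c + y\<^sup>2)) (at y)"
    unfolding has_real_derivative_iff_has_vector_derivative[symmetric]
    by (intro sqrt_plus_square_primitive_deriv log_arg_pos) auto
qed (rule assms(2))

lemma has_integral_sqrt_minus_square:
  fixes a b m :: real
  assumes "0 \<le> a" "a \<le> b" "b\<^sup>2 < m"
  shows "((\<lambda>y. sqrt (m - y\<^sup>2)) has_integral
    sqrt_minus_square_primitive m b - sqrt_minus_square_primitive m a) {a..b}"
proof (rule fundamental_theorem_of_calculus)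
  fix y
  assume "y \<in> {a..b}"
  then have "y\<^sup>2 \<le> b\<^sup>2"
    using assms(1) by (intro power_mono) auto
  then have "y\<^sup>2 < m"
    using assms(3) by linarith
  then show "(sqrt_minus_square_primitive m has_vector_derivative sqrt (m - y\<^sup>2)) (at y within {a..b})"
    unfolding has_real_derivative_iff_has_vector_derivative[symmetric]
    by (rule has_field_derivative_at_within[OF sqrt_minus_square_primitive_deriv])
qed (rule assms(2))

definition slice_outer_radius :: "real \<Rightarrow> real \<Rightarrow> real" where
  "slice_outer_radius x y = sqrt (1 - \<bar>x\<^sup>2 - y\<^sup>2\<bar>)"

definition slice_inner_radius :: "real \<Rightarrow> real \<Rightarrow> real" where
  "slice_inner_radius x y = sqrt (max 0 (x\<^sup>2 + y\<^sup>2 - 1))"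

(* Outside the square |x|, |y| <= 1 this is nonpositive; ennreal truncates it to the correct measure 0. *)
definition slice_length :: "real \<Rightarrow> real \<Rightarrow> real" where
  "slice_length x y = 2 * (slice_outer_radius x y - slice_inner_radius x y)"

lemma emeasure_hyperboloid_region_slice:
  "emeasure lborel {z. (x, y, z) \<in> hyperboloid_region} = ennreal (slice_length x y)"
proof -
  have "{z. (x, y, z) \<in> hyperboloid_region} = {z. x\<^sup>2 + y\<^sup>2 - 1 \<le> z\<^sup>2 \<and> z\<^sup>2 \<le> 1 - \<bar>x\<^sup>2 - y\<^sup>2\<bar>}"
    unfolding hyperboloid_region_def by (auto simp: abs_if)
  then show ?thesis
    unfolding slice_length_def slice_outer_radius_def slice_inner_radius_def
    by (simp add: emeasure_lborel_square_between)
qed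

lemma slice_length_abs: "slice_length \<bar>x\<bar> \<bar>y\<bar> = slice_length x y"
  by (simp add: slice_length_def slice_outer_radius_def slice_inner_radius_def)

lemma slice_length_nonneg:
  assumes "x\<^sup>2 \<le> 1" "y\<^sup>2 \<le> 1"
  shows "0 \<le> slice_length x y"
proof -
  have "max 0 (x\<^sup>2 + y\<^sup>2 - 1) \<le> 1 - \<bar>x\<^sup>2 - y\<^sup>2\<bar>"
    unfolding max_def using assms zero_le_power2[of x] zero_le_power2[of y] by (smt (verit))
  then show ?thesis
    unfolding slice_length_def slice_outer_radius_def slice_inner_radius_def
    by (simp add: real_sqrt_le_mono)
qed

lemma slice_length_nonpos:
  assumes "1 \<le> x\<^sup>2 \<or> 1 \<le> y\<^sup>2"
  shows "slice_length x y \<le> 0"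
proof -
  have "1 - \<bar>x\<^sup>2 - y\<^sup>2\<bar> \<le> max 0 (x\<^sup>2 + y\<^sup>2 - 1)"
    using assms by (auto simp: max_def abs_if)
  then show ?thesis
    unfolding slice_length_def slice_outer_radius_def slice_inner_radius_def
    by (simp add: real_sqrt_le_mono)
qed

lemma has_integral_slice_outer_radius:
  assumes "0 < a" "a < 1"
  shows "(slice_outer_radius a has_integral
      (sqrt_plus_square_primitive (1 - a\<^sup>2) a - sqrt_plus_square_primitive (1 - a\<^sup>2) 0)
    + (sqrt_minus_square_primitive (1 + a\<^sup>2) 1 - sqrt_minus_square_primitive (1 + a\<^sup>2) a)) {0..1}"
proof (rule has_integral_combine[of 0 a 1])
  have "a\<^sup>2 < 1"
    using assms by (simp add: abs_square_less_1)
  then show "((slice_outer_radius a) has_integral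
      sqrt_plus_square_primitive (1 - a\<^sup>2) a - sqrt_plus_square_primitive (1 - a\<^sup>2) 0) {0..a}"
    by (intro has_integral_eq[OF _ has_integral_sqrt_plus_square])
      (use assms in \<open>auto simp: slice_outer_radius_def power_mono\<close>)
  show "((slice_outer_radius a) has_integral
      sqrt_minus_square_primitive (1 + a\<^sup>2) 1 - sqrt_minus_square_primitive (1 + a\<^sup>2) a) {a..1}"
    by (intro has_integral_eq[OF _ has_integral_sqrt_minus_square])
      (use assms in \<open>auto simp: slice_outer_radius_def power_mono\<close>)
qed (use assms in auto)

lemma has_integral_slice_inner_radius:
  assumes "0 < a" "a < 1"
  shows "(slice_inner_radius a has_integral
      sqrt_plus_square_primitive (a\<^sup>2 - 1) 1 - sqrt_plus_square_primitive (a\<^sup>2 - 1) (sqrt (1 - a\<^sup>2))) {0..1}"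
proof -
  define c where "c = sqrt (1 - a\<^sup>2)"
  have "a\<^sup>2 < 1"
    using assms by (simp add: abs_square_less_1)
  then have c: "0 < c" "c < 1" "c\<^sup>2 = 1 - a\<^sup>2"
    using assms by (simp_all add: c_def)
  have zero: "(slice_inner_radius a has_integral 0) {0..c}"
  proof (rule has_integral_eq[OF _ has_integral_0])
    fix y
    assume "y \<in> {0..c}"
    then have "y\<^sup>2 \<le> c\<^sup>2"
      by (intro power_mono) auto
    with c show "0 = slice_inner_radius a y"
      by (simp add: slice_inner_radius_def max_def)
  qed
  have rest: "(slice_inner_radius a has_integral
      sqrt_plus_square_primitive (a\<^sup>2 - 1) 1 - sqrt_plus_square_primitive (a\<^sup>2 - 1) c) {c..1}"
  proof (rule has_integral_eq[OF _ has_integral_sqrt_plus_square])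
    fix y
    assume "y \<in> {c..1}"
    then have "c\<^sup>2 \<le> y\<^sup>2"
      using c by (intro power_mono) auto
    with c show "sqrt (a\<^sup>2 - 1 + y\<^sup>2) = slice_inner_radius a y"
      by (simp add: slice_inner_radius_def max_def)
  qed (use c in auto)
  have "0 \<le> c" "c \<le> 1"
    using c by simp_all
  from has_integral_combine[OF this zero rest] show ?thesis
    unfolding c_def[symmetric] by simp
qed

definition cross_section_area :: "real \<Rightarrow> real" where
  "cross_section_area a = 2 * ((1 - a\<^sup>2) * (ln (1 + a) - ln (1 - a)) + (1 + a\<^sup>2) * (pi/2 - 2 * arctan a))"

lemma has_integral_slice_length_half:
  assumes "0 < a" "a < 1"
  shows "(slice_length a has_integral cross_section_area a / 2) {0..1}"
proof -
  define k where "k = 1 - a\<^sup>2"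
  have "a\<^sup>2 < 1"
    using assms by (simp add: abs_square_less_1)
  then have k: "0 < k" "(sqrt k)\<^sup>2 = k"
    by (simp_all add: k_def)
  have ln_sqrt_k: "ln (sqrt k) = (ln (1 - a) + ln (1 + a)) / 2"
  proof -
    have "k = (1 - a) * (1 + a)"
      by (simp add: k_def algebra_simps power2_eq_square)
    then show ?thesis
      using assms k(1) by (simp add: ln_sqrt ln_mult)
  qed
  have arctan_inv: "arctan (1 / a) = pi / 2 - arctan a"
    using arctan_inverse[of a] assms by (simp add: inverse_eq_divide)
  have k_identities: "k + a\<^sup>2 = 1" "1 + a\<^sup>2 - 1 = a\<^sup>2" "1 - k = a\<^sup>2"
    by (simp_all add: k_def)
  have primitive_values:
    "sqrt_plus_square_primitive k a = (a + k * ln (1 + a)) / 2"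
    "sqrt_plus_square_primitive k 0 = k * ln (sqrt k) / 2"
    "sqrt_minus_square_primitive (1 + a\<^sup>2) 1 = (a + (1 + a\<^sup>2) * (pi / 2 - arctan a)) / 2"
    "sqrt_minus_square_primitive (1 + a\<^sup>2) a = (a + (1 + a\<^sup>2) * arctan a) / 2"
    "sqrt_plus_square_primitive (- k) 1 = (a - k * ln (1 + a)) / 2"
    "sqrt_plus_square_primitive (- k) (sqrt k) = - k * ln (sqrt k) / 2"
    using assms k unfolding sqrt_plus_square_primitive_def sqrt_minus_square_primitive_def
    by (simp_all add: k_identities arctan_inv add.commute[of a 1])
  have "(slice_length a has_integral 2 * (
      (sqrt_plus_square_primitive k a - sqrt_plus_square_primitive k 0)
    + (sqrt_minus_square_primitive (1 + a\<^sup>2) 1 - sqrt_minus_square_primitive (1 + a\<^sup>2) a)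
    - (sqrt_plus_square_primitive (- k) 1 - sqrt_plus_square_primitive (- k) (sqrt k)))) {0..1}"
    unfolding slice_length_def k_def minus_diff_eq
    by (intro has_integral_mult_right has_integral_diff has_integral_slice_outer_radius
        has_integral_slice_inner_radius assms)
  also have "2 * (
      (sqrt_plus_square_primitive k a - sqrt_plus_square_primitive k 0)
    + (sqrt_minus_square_primitive (1 + a\<^sup>2) 1 - sqrt_minus_square_primitive (1 + a\<^sup>2) a)
    - (sqrt_plus_square_primitive (- k) 1 - sqrt_plus_square_primitive (- k) (sqrt k)))
    = cross_section_area a / 2"
    unfolding primitive_values ln_sqrt_k unfolding cross_section_area_def k_def by (simp add: field_simps)
  finally show ?thesis .
qed

lemma has_integral_slice_length:
  assumes "0 < \<bar>x\<bar>" "\<bar>x\<bar> < 1"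
  shows "(slice_length x has_integral cross_section_area \<bar>x\<bar>) {-1..1}"
  using has_integral_comp_abs[OF has_integral_slice_length_half[OF assms]]
  by (simp add: slice_length_abs)

(* x = 0 is excluded only because the primitive of the outer radius involves arctan (1 / a). *)
lemma nn_integral_slice_length:
  assumes "x \<notin> {-1, 0, 1}"
  shows "(\<integral>\<^sup>+y. ennreal (slice_length x y) \<partial>lborel) = ennreal (cross_section_area \<bar>x\<bar>) * indicator {-1..1} x"
proof (cases "\<bar>x\<bar> < 1")
  case True
  have "slice_length x y \<le> 0" if "y \<notin> {-1..1}" for y
    using that abs_square_less_1[of y] by (intro slice_length_nonpos) auto
  then have "(\<integral>\<^sup>+y. ennreal (slice_length x y) \<partial>lborel) =
      (\<integral>\<^sup>+y. ennreal (slice_length x y) * indicator {-1..1} y \<partial>lborel)"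
    by (intro nn_integral_cong) (simp add: indicator_def ennreal_neg)
  also have "\<dots> = ennreal (cross_section_area \<bar>x\<bar>)"
    using True assms
    by (intro nn_integral_has_integral_lebesgue' has_integral_slice_length slice_length_nonneg)
      (auto simp: abs_square_le_1 abs_square_less_1 less_imp_le)
  finally show ?thesis
    using True by (auto simp: indicator_def abs_less_iff)
next
  case False
  with assms have "1 < \<bar>x\<bar>"
    by auto
  then have "slice_length x y \<le> 0" for y
    using abs_square_less_1[of x] by (intro slice_length_nonpos) auto
  with \<open>1 < \<bar>x\<bar>\<close> show ?thesis
    by (auto simp: ennreal_neg indicator_def)
qed

definition cross_section_area_primitive :: "real \<Rightarrow> real" where
  "cross_section_area_primitive a = 2 * ((a - a^3/3 - 2/3) * (ln (1 + a) - ln (1 - a)) + 4/3 * ln (1 + a)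
     + (a + a^3/3) * (pi/2 - 2 * arctan a) + 2/3 * ln (1 + a\<^sup>2))"

lemma cross_section_area_primitive_deriv:
  assumes "-1 < a" "a < 1"
  shows "(cross_section_area_primitive has_real_derivative cross_section_area a) (at a)"
proof -
  have "0 < 1 + a" "0 < 1 - a" "0 < 1 + a\<^sup>2"
    using assms by (auto intro: add_pos_nonneg)
  then show ?thesis
    unfolding cross_section_area_primitive_def
    by (auto intro!: derivative_eq_intros simp: cross_section_area_def divide_simps) algebra
qed

(* The coefficient a - a^3/3 - 2/3 = - (1 - a)^2 (a + 2) / 3 of ln (1 - a) vanishes at 1,
   which makes the primitive continuous there. *)
lemma tendsto_cross_section_area_primitive_left_1:
  "(cross_section_area_primitive \<longlongrightarrow> 4 * ln 2) (at_left 1)"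
proof -
  have "((\<lambda>a. 2 * ((a - a^3/3 - 2/3) * (ln (1 + a) - ln (1 - a)) + 4/3 * ln (1 + a) + 2/3 * ln (1 + a\<^sup>2)))
      \<longlongrightarrow> 4 * ln 2) (at_left (1::real))"
    by real_asymp
  moreover have "((\<lambda>a. 2 * ((a + a^3/3) * (pi/2 - 2 * arctan a))) \<longlongrightarrow> 0) (at_left (1::real))"
    by (auto intro!: tendsto_eq_intros simp: arctan_one)
  ultimately have "((\<lambda>a. 2 * ((a - a^3/3 - 2/3) * (ln (1 + a) - ln (1 - a)) + 4/3 * ln (1 + a) + 2/3 * ln (1 + a\<^sup>2))
      + 2 * ((a + a^3/3) * (pi/2 - 2 * arctan a))) \<longlongrightarrow> 4 * ln 2 + 0) (at_left 1)"
    by (rule tendsto_add)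
  then show ?thesis
    unfolding cross_section_area_primitive_def by (simp add: algebra_simps)
qed

lemma has_integral_cross_section_area:
  "(cross_section_area has_integral 4 * ln 2) {0..1}"
proof -
  have deriv: "(cross_section_area_primitive has_real_derivative cross_section_area a) (at a)"
    if "0 \<le> a" "a < 1" for a
    using that by (intro cross_section_area_primitive_deriv) auto
  have primitive_at_0: "cross_section_area_primitive 0 = 0"
    and primitive_at_1: "cross_section_area_primitive 1 = 4 * ln 2"
    by (simp_all add: cross_section_area_primitive_def)
  have "continuous_on {0..1} cross_section_area_primitive"
  proof (rule continuous_on_IccI)
    show "(cross_section_area_primitive \<longlongrightarrow> cross_section_area_primitive 0) (at_right 0)"
      using DERIV_isCont[OF deriv[of 0]] by (simp add: isCont_def filterlim_at_split)
    show "(cross_section_area_primitive \<longlongrightarrow> cross_section_area_primitive 1) (at_left 1)"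
      using tendsto_cross_section_area_primitive_left_1 unfolding primitive_at_1 .
  qed (use DERIV_isCont[OF deriv] in \<open>auto simp: isCont_def\<close>)
  then have "(cross_section_area has_integral
      cross_section_area_primitive 1 - cross_section_area_primitive 0) {0..1}"
    by (intro fundamental_theorem_of_calculus_interior)
      (auto simp: has_real_derivative_iff_has_vector_derivative[symmetric] deriv)
  then show ?thesis
    unfolding primitive_at_0 primitive_at_1 by simp
qed

lemma cross_section_area_nonneg:
  assumes "0 \<le> a" "a \<le> 1"
  shows "0 \<le> cross_section_area a"
proof -
  have "0 \<le> (1 - a\<^sup>2) * (ln (1 + a) - ln (1 - a))"
  proof (cases "a = 1")
    case False
    with assms have "ln (1 - a) \<le> ln (1 + a)" "0 \<le> 1 - a\<^sup>2"
      by (simp_all add: power_le_one)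
    then show ?thesis
      by simp
  qed simp
  moreover have "arctan a \<le> pi / 4"
    using assms arctan_le_iff[of a 1] by (simp add: arctan_one)
  ultimately show ?thesis
    unfolding cross_section_area_def by (simp add: add_pos_nonneg)
qed

lemma closed_hyperboloid_region: "closed hyperboloid_region"
  unfolding hyperboloid_region_def case_prod_unfold
  by (intro closed_Collect_conj closed_Collect_le continuous_intros)

theorem mainTheorem1:
  shows "emeasure lebesgue hyperboloid_region = ennreal (8 * ln 2)"
proof -
  have borel: "hyperboloid_region \<in> sets borel"
    using closed_hyperboloid_region by (rule borel_closed)
  have "emeasure lebesgue hyperboloid_region = emeasure lborel hyperboloid_region"
    using borel by simp
  also have "\<dots> = (\<integral>\<^sup>+x. (\<integral>\<^sup>+y. ennreal (slice_length x y) \<partial>lborel) \<partial>lborel)"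
    by (simp add: emeasure_lborel_triple_iterated[OF borel] emeasure_hyperboloid_region_slice)
  also have "\<dots> = (\<integral>\<^sup>+x. ennreal (cross_section_area \<bar>x\<bar>) * indicator {-1..1} x \<partial>lborel)"
  proof (rule nn_integral_cong_AE)
    have "AE x in lborel. x \<notin> {-1, 0, 1}"
      by (intro AE_not_in countable_imp_null_set_lborel) auto
    then show "AE x in lborel. (\<integral>\<^sup>+y. ennreal (slice_length x y) \<partial>lborel) =
        ennreal (cross_section_area \<bar>x\<bar>) * indicator {-1..1} x"
      by eventually_elim (rule nn_integral_slice_length)
  qed
  also have "\<dots> = ennreal (8 * ln 2)"
    using has_integral_comp_abs[OF has_integral_cross_section_area]
    by (intro nn_integral_has_integral_lebesgue' cross_section_area_nonneg) auto
  finally show ?thesis .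
qed

end
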